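(* Consider the linear advection equation $\partial_t u+\partial_x(\lambda u)=0$ with constant $\lambda>0$ on a uniform grid of $\mathbb{R}$ with cells $T^{(i)}=[x_{i-1/2},x_{i+1/2}]$, $x_{i+1/2}=(i+\tfrac12)h$, $h>0$. Let $N\le M$ be integers, let $\mathcal{V}_h$ be the space of functions that are polynomials of degree at most $N$ on each cell, and let $t\mapsto u_h(\cdot,t)\in\mathcal{V}_h$ be differentiable in $t$. Let $w_h(\cdot,t)$ be piecewise polynomial of degree at most $M$ on each cell, satisfying $\int_{T^{(i)}}\varphi\, w_h\,dx=\int_{T^{(i)}}\varphi\, u_h\,dx$ for all cells $T^{(i)}$ and all $\varphi\in\mathcal{V}_h$. Denote one-sided limits at interfaces by $u^{\pm}_{i+1/2}$, $w^{\pm}_{i+1/2}$ (superscript $-$: limit from the left, $+$: from the right). Suppose $u_h$ satisfies the semi-discrete $P_NP_M$ scheme with the upwind flux $f^w_{i+1/2}=\lambda w^-_{i+1/2}$: $$\int_{T^{(i)}}\partial_t u_h\,\varphi\,dx+f^w_{i+1/2}\varphi^-_{i+1/2}-f^w_{i-1/2}\varphi^+_{i-1/2}-\int_{T^{(i)}}\lambda w_h\,\varphi'\,dx=0\quad\text{for all }\varphi\in\mathcal{V}_h\text{ and all } i.$$ Let $E^{(i)}(t)=\int_{T^{(i)}}\tfrac12 u_h(x,t)^2\,dx$, $g(u)=\lambda u^2/2$ and $\tilde F_{i+1/2}=f^w_{i+1/2}u^-_{i+1/2}-g(u^-_{i+1/2})$. If at the interface $x_{i-1/2}$ either (a) $u^-_{i-1/2}>u^+_{i-1/2}$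 and $w^-_{i-1/2}\ge \tfrac12\big(u^-_{i-1/2}+u^+_{i-1/2}\big)$, or (b) $u^-_{i-1/2}<u^+_{i-1/2}$ and $w^-_{i-1/2}\le \tfrac12\big(u^-_{i-1/2}+u^+_{i-1/2}\big)$, then the cell square-entropy inequality $$\frac{d}{dt}E^{(i)}+\tilde F_{i+1/2}-\tilde F_{i-1/2}\le 0$$ holds for the cell $T^{(i)}$.
   Context: $\tilde F_{i+1/2}$ is a numerical entropy flux consistent with the entropy flux $F(u)=f(u)u-g(u)$ of the square entropy $Q(u)=u^2/2$, where $g$ is a primitive of $f(u)=\lambda u$. The function $w_h$ is the high-order reconstruction of $u_h$ used in the $P_NP_M$ scheme; only the stated moment-preservation property of $w_h$ is assumed. *)

theory Defs
  imports "HOL-Analysis.Analysis" "HOL-Computational_Algebra.Polynomial"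
begin

definition xhalf :: "real \<Rightarrow> int \<Rightarrow> real" where
  "xhalf h i = (real_of_int i + 1/2) * h"

definition cell :: "real \<Rightarrow> int \<Rightarrow> real set" where
  "cell h i = {xhalf h (i - 1) .. xhalf h i}"

end

theory Submission imports Defs begin

text \<open>Testing the scheme on the cell with \<open>\<phi> = u\<^sub>h\<close> gives \<open>dE/dt\<close>; the moment property
  replaces \<open>w\<^sub>h\<close> by \<open>u\<^sub>h\<close> in the volume term, which then integrates exactly to \<open>g(u\<^sup>-) - g(u\<^sup>+)\<close>
  across the cell. What is left of the entropy production is the interface term
  \<open>\<lambda> (u\<^sup>+ - u\<^sup>-)(w\<^sup>- - (u\<^sup>- + u\<^sup>+)/2)\<close> at \<open>x\<^sub>i\<^sub>-\<^sub>1\<^sub>/\<^sub>2\<close>, whose sign is exactly what conditions (a)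
  and (b) control.\<close>

lemma degree_le_of_coeff_derivatives:
  fixes P :: "real \<Rightarrow> real poly"
  assumes "\<And>s. degree (P s) \<le> N"
    and "\<And>k. ((\<lambda>s. coeff (P s) k) has_real_derivative coeff Q k) (at t)"
  shows "degree Q \<le> N"
proof (rule degree_le, intro allI impI)
  fix k assume "N < k"
  then have "(\<lambda>s. coeff (P s) k) = (\<lambda>s. 0)"
    using assms(1) by (intro ext coeff_eq_0) (meson le_less_trans)
  with assms(2)[of k] show "coeff Q k = 0"
    using DERIV_const DERIV_unique by metis
qed

lemma poly_eq_sum_le_degree_bound:
  fixes p :: "real poly"
  assumes "degree p \<le> N"
  shows "poly p x = (\<Sum>k\<le>N. coeff p k * x ^ k)"
proof -
  have "poly p x = (\<Sum>k\<le>degree p. coeff p k * x ^ k)" by (rule poly_altdef)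
  also have "\<dots> = (\<Sum>k\<le>N. coeff p k * x ^ k)"
    by (rule sum.mono_neutral_left) (use assms le_degree in auto)
  finally show ?thesis .
qed

lemma integral_poly_mult_eq_moments:
  fixes p q :: "real poly"
  assumes "degree p \<le> N" "degree q \<le> N"
  shows "integral {a..b} (\<lambda>x. poly p x * poly q x)
    = (\<Sum>k\<le>N. \<Sum>l\<le>N. coeff p k * coeff q l * integral {a..b} (\<lambda>x. x ^ (k + l)))"
proof -
  have "(\<lambda>x. poly p x * poly q x) = (\<lambda>x. \<Sum>k\<le>N. \<Sum>l\<le>N. coeff p k * coeff q l * x ^ (k + l))"
    by (rule ext) (simp add: poly_eq_sum_le_degree_bound[OF assms(1)]
        poly_eq_sum_le_degree_bound[OF assms(2)] sum_product power_add mult_ac)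
  moreover have "\<And>k l. (\<lambda>x::real. coeff p k * coeff q l * x ^ (k + l)) integrable_on {a..b}"
    by (intro integrable_continuous_interval continuous_intros)
  ultimately show ?thesis
    by (simp add: integral_sum integrable_sum integral_mult_right)
qed

lemma has_real_derivative_integral_poly_square:
  fixes P :: "real \<Rightarrow> real poly"
  assumes deg: "\<And>s. degree (P s) \<le> N"
    and coeff_deriv: "\<And>k. ((\<lambda>s. coeff (P s) k) has_real_derivative coeff Q k) (at t)"
  shows "((\<lambda>s. integral {a..b} (\<lambda>x. (poly (P s) x)\<^sup>2 / 2)) has_real_derivative
           integral {a..b} (\<lambda>x. poly Q x * poly (P t) x)) (at t)"
proof -
  define m where "m k l = integral {a..b} (\<lambda>x::real. x ^ (k + l))" for k l
  define c where "c k s = coeff (P s) k" for k s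
  define d where "d k = coeff Q k" for k
  have degQ: "degree Q \<le> N"
    using deg coeff_deriv by (rule degree_le_of_coeff_derivatives)
  have energy: "integral {a..b} (\<lambda>x. (poly (P s) x)\<^sup>2 / 2)
      = (\<Sum>k\<le>N. \<Sum>l\<le>N. c k s * c l s * m k l) / 2" for s
    by (simp add: power2_eq_square integral_divide
        integral_poly_mult_eq_moments[OF deg deg] c_def m_def)
  have "((\<lambda>s. (\<Sum>k\<le>N. \<Sum>l\<le>N. c k s * c l s * m k l) / 2) has_real_derivative
      (\<Sum>k\<le>N. \<Sum>l\<le>N. (d k * c l t + c k t * d l) * m k l) / 2) (at t)"
    unfolding c_def d_def
    by (intro DERIV_cdivide DERIV_sum) (auto intro!: derivative_eq_intros coeff_deriv)
  moreover have "(\<Sum>k\<le>N. \<Sum>l\<le>N. (d k * c l t + c k t * d l) * m k l) / 2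
      = (\<Sum>k\<le>N. \<Sum>l\<le>N. d k * c l t * m k l)"
  proof -
    have "(\<Sum>k\<le>N. \<Sum>l\<le>N. c k t * d l * m k l) = (\<Sum>k\<le>N. \<Sum>l\<le>N. d k * c l t * m k l)"
      by (subst sum.swap) (simp add: m_def add.commute mult_ac)
    then show ?thesis by (simp add: distrib_right sum.distrib)
  qed
  moreover have "(\<Sum>k\<le>N. \<Sum>l\<le>N. d k * c l t * m k l) = integral {a..b} (\<lambda>x. poly Q x * poly (P t) x)"
    by (simp add: integral_poly_mult_eq_moments[OF degQ deg] c_def d_def m_def)
  ultimately show ?thesis
    unfolding energy by simp
qed

lemma integral_poly_pderiv_mult_self:
  fixes u :: "real poly"
  assumes "a \<le> b"
  shows "integral {a..b} (\<lambda>x. poly (pderiv u) x * poly u x) = (poly u b)\<^sup>2 / 2 - (poly u a)\<^sup>2 / 2"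
proof -
  have "((\<lambda>x. poly (pderiv u) x * poly u x) has_integral
      (\<lambda>x. (poly u x)\<^sup>2 / 2) b - (\<lambda>x. (poly u x)\<^sup>2 / 2) a) {a..b}"
  proof (rule fundamental_theorem_of_calculus[OF assms])
    fix x
    have "((\<lambda>x. (poly u x)\<^sup>2 / 2) has_real_derivative poly (pderiv u) x * poly u x) (at x)"
      by (auto intro!: derivative_eq_intros poly_DERIV)
    then show "((\<lambda>x. (poly u x)\<^sup>2 / 2) has_vector_derivative poly (pderiv u) x * poly u x)
        (at x within {a..b})"
      by (simp add: has_real_derivative_iff_has_vector_derivative has_vector_derivative_at_within)
  qed
  then show ?thesis by (simp add: integral_unique)
qed

lemma upwind_interface_production_nonpos:
  fixes lam ul ur w :: real
  assumes "lam > 0"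
    and "(ul > ur \<and> w \<ge> (ul + ur) / 2) \<or> (ul < ur \<and> w \<le> (ul + ur) / 2)"
  shows "lam * ((ur - ul) * (w - (ul + ur) / 2)) \<le> 0"
proof -
  have "(ur - ul) * (w - (ul + ur) / 2) \<le> 0"
    using assms(2) by (auto intro: mult_nonpos_nonneg mult_nonneg_nonpos)
  with assms(1) show ?thesis by (simp add: mult_nonneg_nonpos)
qed

theorem mainTheorem3:
  fixes lam h :: real and N M :: nat and i :: int and t :: real
    and U Ut W :: "int \<Rightarrow> real \<Rightarrow> real poly"
  assumes lam_pos: "lam > 0" and h_pos: "h > 0" and NM: "N \<le> M"
    and U_deg: "\<And>j s. degree (U j s) \<le> N"
    and U_diff: "\<And>j s k. ((\<lambda>r. coeff (U j r) k) has_real_derivative coeff (Ut j s) k) (at s)"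
    and W_deg: "\<And>j s. degree (W j s) \<le> M"
    and W_moments: "\<And>j s \<phi>. degree \<phi> \<le> N \<Longrightarrow>
        integral (cell h j) (\<lambda>x. poly \<phi> x * poly (W j s) x)
      = integral (cell h j) (\<lambda>x. poly \<phi> x * poly (U j s) x)"
    and scheme: "\<And>j s (\<phi> :: int \<Rightarrow> real poly). (\<forall>k. degree (\<phi> k) \<le> N) \<Longrightarrow>
        integral (cell h j) (\<lambda>x. poly (Ut j s) x * poly (\<phi> j) x)
        + lam * poly (W j s) (xhalf h j) * poly (\<phi> j) (xhalf h j)
        - lam * poly (W (j - 1) s) (xhalf h (j - 1)) * poly (\<phi> j) (xhalf h (j - 1))
        - integral (cell h j) (\<lambda>x. lam * poly (W j s) x * poly (pderiv (\<phi> j)) x) = 0"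
    and interface:
      "(poly (U (i - 1) t) (xhalf h (i - 1)) > poly (U i t) (xhalf h (i - 1)) \<and>
          poly (W (i - 1) t) (xhalf h (i - 1))
            \<ge> (poly (U (i - 1) t) (xhalf h (i - 1)) + poly (U i t) (xhalf h (i - 1))) / 2)
     \<or> (poly (U (i - 1) t) (xhalf h (i - 1)) < poly (U i t) (xhalf h (i - 1)) \<and>
          poly (W (i - 1) t) (xhalf h (i - 1))
            \<le> (poly (U (i - 1) t) (xhalf h (i - 1)) + poly (U i t) (xhalf h (i - 1))) / 2)"
  shows "deriv (\<lambda>s. integral (cell h i) (\<lambda>x. (poly (U i s) x)^2 / 2)) t
         + (lam * poly (W i t) (xhalf h i) * poly (U i t) (xhalf h i)
            - lam * (poly (U i t) (xhalf h i))^2 / 2)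
         - (lam * poly (W (i - 1) t) (xhalf h (i - 1)) * poly (U (i - 1) t) (xhalf h (i - 1))
            - lam * (poly (U (i - 1) t) (xhalf h (i - 1)))^2 / 2) \<le> 0"
proof -
  define a where "a = xhalf h (i - 1)"
  define b where "b = xhalf h i"
  define u where "u = U i t"
  have cell_eq: "cell h i = {a..b}" by (simp add: cell_def a_def b_def)
  have "a \<le> b" using h_pos by (simp add: a_def b_def xhalf_def field_simps)
  have dE: "deriv (\<lambda>s. integral (cell h i) (\<lambda>x. (poly (U i s) x)^2 / 2)) t
      = integral {a..b} (\<lambda>x. poly (Ut i t) x * poly u x)"
    unfolding cell_eq u_def
    by (intro DERIV_imp_deriv has_real_derivative_integral_poly_square[where N = N] U_deg U_diff)
  have "degree (pderiv u) \<le> N" using U_deg[of i t] by (simp add: degree_pderiv u_def)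
  then have "integral {a..b} (\<lambda>x. poly (pderiv u) x * poly (W i t) x)
      = integral {a..b} (\<lambda>x. poly (pderiv u) x * poly u x)"
    using W_moments[of "pderiv u" i t] by (simp add: cell_eq u_def)
  moreover have "(\<lambda>x. lam * poly (W i t) x * poly (pderiv u) x)
      = (\<lambda>x. lam * (poly (pderiv u) x * poly (W i t) x))"
    by (simp add: mult_ac)
  ultimately have volume: "integral {a..b} (\<lambda>x. lam * poly (W i t) x * poly (pderiv u) x)
      = lam * ((poly u b)\<^sup>2 / 2 - (poly u a)\<^sup>2 / 2)"
    by (simp add: integral_poly_pderiv_mult_self[OF \<open>a \<le> b\<close>])
  have tested: "integral {a..b} (\<lambda>x. poly (Ut i t) x * poly u x)
        + lam * poly (W i t) b * poly u b - lam * poly (W (i - 1) t) a * poly u a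
        - integral {a..b} (\<lambda>x. lam * poly (W i t) x * poly (pderiv u) x) = 0"
    using scheme[of "\<lambda>_. u" i t] U_deg by (simp add: a_def b_def u_def cell_eq)
  have "lam * ((poly u a - poly (U (i - 1) t) a)
      * (poly (W (i - 1) t) a - (poly (U (i - 1) t) a + poly u a) / 2)) \<le> 0"
    using upwind_interface_production_nonpos[OF lam_pos] interface
    unfolding a_def u_def by blast
  with dE volume tested show ?thesis
    unfolding a_def[symmetric] b_def[symmetric] u_def[symmetric]
    by (simp add: field_simps power2_eq_square)
qed

end
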